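(* Let $n\ge3$, $\alpha=(\alpha_2,\dots,\alpha_{n-1})$ positive integers, $N>|\alpha|$, $L=N-|\alpha|$, and $2\le\ell\le n$. There exists a bijection $\phi:W^>\to W^{\le}$ such that: (1) $\phi$ maps $W_k^>$ bijectively onto $W_{k+1}^{\le}$ for each $0\le k\le L-1$; (2) $\mathrm{quinv}'(\phi(w))=\mathrm{quinv}'(w)$ for all $w\in W^>$; (3) the subword of $w$ consisting of the letters $2,\dots,n-1$ equals the corresponding subword of $\phi(w)$.
   Context: $|\alpha|=\sum_i\alpha_i$. For $0\le k\le L$, $W_k$ is the set of words $w=(w_1,\dots,w_N)$ over $\{1,\dots,n\}$ containing exactly $k$ letters $n$, exactly $L-k$ letters $1$, and exactly $\alpha_i$ letters $i$ for $2\le i\le n-1$. $\mathrm{coinv}(w)=\#\{(i,j):i<j,\ w_i<w_j\}$ and $\mathrm{quinv}'(w)=\mathrm{coinv}(w)+\binom{\alpha_\ell}{2}+\cdots+\binom{\alpha_{n-1}}{2}+\binom{k}{2}$ for $w\in W_k$ (the middle sum is empty if $\ell=n$). For $w\in W_k$ let $p_n(w)$ be the position, from the left, of the leftmost $n$ in $w$, and $p_1(w)$ the position, counted from the right, of the rightmost $1$ in the word obtained from $w$ by deleting all $n$'s. $W_k^{\le}$ (resp. $W_k^>$) is the set of $w\in W_k$ with $p_n(w)\le p_1(w)$ (resp. $p_n(w)>p_1(w)$), with the conventions $W_0=W_0^>$ and $W_L=W_L^{\le}$. $W^{\le}=\bigcup_kW_k^{\le}$ and $W^>=\bigcup_kW_k^>$.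 *)

theory Defs
  imports Main
begin

(* Words are lists of natural numbers; letters range over {1..n}.
   alpha :: nat => nat gives alpha_i for 2 <= i <= n-1 (other values irrelevant). *)

definition absalpha :: "nat \<Rightarrow> (nat \<Rightarrow> nat) \<Rightarrow> nat" where
  "absalpha n \<alpha> = (\<Sum>i=2..n-1. \<alpha> i)"

definition Lval :: "nat \<Rightarrow> (nat \<Rightarrow> nat) \<Rightarrow> nat \<Rightarrow> nat" where
  "Lval n \<alpha> N = N - absalpha n \<alpha>"

definition Wk :: "nat \<Rightarrow> (nat \<Rightarrow> nat) \<Rightarrow> nat \<Rightarrow> nat \<Rightarrow> nat list set" where
  "Wk n \<alpha> N k = {w. length w = N \<and> set w \<subseteq> {1..n}
      \<and> count_list w n = k \<and> count_list w 1 = Lval n \<alpha> N - k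
      \<and> (\<forall>i\<in>{2..n-1}. count_list w i = \<alpha> i)}"

definition coinv :: "nat list \<Rightarrow> nat" where
  "coinv w = card {(i, j). i < j \<and> j < length w \<and> w ! i < w ! j}"

definition quinv' :: "nat \<Rightarrow> (nat \<Rightarrow> nat) \<Rightarrow> nat \<Rightarrow> nat list \<Rightarrow> nat" where
  "quinv' n \<alpha> l w = coinv w + (\<Sum>i=l..n-1. \<alpha> i choose 2) + (count_list w n choose 2)"

definition pn :: "nat \<Rightarrow> nat list \<Rightarrow> nat" where
  "pn n w = Suc (LEAST i. i < length w \<and> w ! i = n)"

definition p1 :: "nat \<Rightarrow> nat list \<Rightarrow> nat" where
  "p1 n w = (let v = rev (filter (\<lambda>x. x \<noteq> n) w) in Suc (LEAST i. i < length v \<and> v ! i = 1))"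

definition Wk_le :: "nat \<Rightarrow> (nat \<Rightarrow> nat) \<Rightarrow> nat \<Rightarrow> nat \<Rightarrow> nat list set" where
  "Wk_le n \<alpha> N k =
     (if k = Lval n \<alpha> N then Wk n \<alpha> N k
      else if k = 0 then {}
      else {w \<in> Wk n \<alpha> N k. pn n w \<le> p1 n w})"

definition Wk_gt :: "nat \<Rightarrow> (nat \<Rightarrow> nat) \<Rightarrow> nat \<Rightarrow> nat \<Rightarrow> nat list set" where
  "Wk_gt n \<alpha> N k =
     (if k = 0 then Wk n \<alpha> N k
      else if k = Lval n \<alpha> N then {}
      else {w \<in> Wk n \<alpha> N k. pn n w > p1 n w})"

definition W_le :: "nat \<Rightarrow> (nat \<Rightarrow> nat) \<Rightarrow> nat \<Rightarrow> nat list set" where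
  "W_le n \<alpha> N = (\<Union>k\<in>{0..Lval n \<alpha> N}. Wk_le n \<alpha> N k)"

definition W_gt :: "nat \<Rightarrow> (nat \<Rightarrow> nat) \<Rightarrow> nat \<Rightarrow> nat list set" where
  "W_gt n \<alpha> N = (\<Union>k\<in>{0..Lval n \<alpha> N}. Wk_gt n \<alpha> N k)"

end

theory Submission
  imports Defs "HOL-Library.Multiset"
begin

(* A word is coded by its n-free part together with the multiset of gaps of its letters n, the
   gap of an n being the number of other letters to its left.  In this code coinv is coinv of the
   n-free part plus the sum of the gaps (an n forms a coinversion with every letter to its left), and
   p_n - 1 is the least gap.

   Writing the n-free part as x @ 1 # u with 1 not in u, phi deletes this rightmost 1, lowers
   every gap by one and adds a new n of gap |u|.  The hypothesis p_n > p_1 says exactly that all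
   old gaps exceed |u|, so the new n is the leftmost one and psi inverts phi by reinserting a 1
   at the least gap.  The 1 was a coinversion with each letter of u, and the k old n's each lose
   one coinversion, while the new n gains |u|: coinv drops by k, which is what
   binomial(k+1, 2) - binomial(k, 2) gives back. *)

fun gaps :: "nat \<Rightarrow> nat list \<Rightarrow> nat list" where
  "gaps c [] = []"
| "gaps c (x # xs) = (if x = c then 0 # gaps c xs else map Suc (gaps c xs))"

fun insert_gaps :: "nat \<Rightarrow> nat list \<Rightarrow> nat list \<Rightarrow> nat list" where
  "insert_gaps c [] G = replicate (length G) c"
| "insert_gaps c (x # xs) G =
     replicate (count_list G 0) c @ x # insert_gaps c xs (map (\<lambda>g. g - 1) (filter (\<lambda>g. g \<noteq> 0) G))"

lemma insert_gaps_mset_cong: "mset G = mset H \<Longrightarrow> insert_gaps c xs G = insert_gaps c xs H"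
proof (induction xs arbitrary: G H)
  case Nil
  then show ?case by (metis insert_gaps.simps(1) size_mset)
next
  case (Cons x xs)
  then have "count_list G 0 = count_list H 0" by (metis count_mset)
  moreover have "mset (map (\<lambda>g. g - 1) (filter (\<lambda>g. g \<noteq> 0) G))
               = mset (map (\<lambda>g. g - 1) (filter (\<lambda>g. g \<noteq> 0) H))"
    using Cons.prems by simp
  ultimately show ?case using Cons.IH by simp
qed

lemma insert_gaps_filter_gaps: "insert_gaps c (filter (\<lambda>x. x \<noteq> c) w) (gaps c w) = w"
proof (induction w)
  case (Cons x w)
  have "insert_gaps c xs (0 # G) = c # insert_gaps c xs G" for xs G
    by (cases xs) auto
  moreover have "map (\<lambda>g. g - 1) (filter (\<lambda>g. g \<noteq> 0) (map Suc G)) = G" for G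
    by (induction G) auto
  ultimately show ?case using Cons by (simp add: count_list_0_iff)
qed simp

lemma filter_insert_gaps:
  "c \<notin> set xs \<Longrightarrow> \<forall>g\<in>set G. g \<le> length xs \<Longrightarrow> filter (\<lambda>x. x \<noteq> c) (insert_gaps c xs G) = xs"
proof (induction xs arbitrary: G)
  case (Cons x xs)
  then have "\<forall>g\<in>set (map (\<lambda>g. g - 1) (filter (\<lambda>g. g \<noteq> 0) G)). g \<le> length xs" by auto
  with Cons show ?case by simp
qed simp

lemma gaps_replicate_append: "gaps c (replicate m c @ ys) = replicate m 0 @ gaps c ys"
  by (induction m) auto

lemma mset_gaps_insert_gaps:
  "c \<notin> set xs \<Longrightarrow> \<forall>g\<in>set G. g \<le> length xs \<Longrightarrow> mset (gaps c (insert_gaps c xs G)) = mset G"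
proof (induction xs arbitrary: G)
  case Nil
  then have "G = replicate (length G) 0" by (simp add: replicate_length_same)
  then show ?case using gaps_replicate_append[of c "length G" "[]"] by (metis append_Nil2 insert_gaps.simps(1) gaps.simps(1))
next
  case (Cons x xs)
  let ?G = "map (\<lambda>g. g - 1) (filter (\<lambda>g. g \<noteq> 0) G)"
  have bound: "\<forall>g\<in>set ?G. g \<le> length xs" using Cons.prems by auto
  have "mset (gaps c (insert_gaps c (x # xs) G))
        = replicate_mset (count_list G 0) 0 + image_mset Suc (mset (gaps c (insert_gaps c xs ?G)))"
    using Cons.prems by (simp add: gaps_replicate_append)
  also have "\<dots> = replicate_mset (count_list G 0) 0 + image_mset Suc (mset ?G)"
    using Cons bound by simp
  also have "image_mset Suc (mset ?G) = filter_mset (\<lambda>g. g \<noteq> 0) (mset G)"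
    by (induction G) auto
  also have "replicate_mset (count_list G 0) 0 = filter_mset (\<lambda>g. g = 0) (mset G)"
    by (simp add: filter_eq_replicate_mset count_mset)
  finally show ?case by (metis multiset_partition)
qed

lemma length_gaps: "length (gaps c w) = count_list w c"
  by (induction w) auto

lemma gaps_eq_Nil_iff: "gaps c w = [] \<longleftrightarrow> c \<notin> set w"
  by (metis length_gaps length_0_conv count_list_0_iff)

lemma gaps_le_length_filter: "g \<in> set (gaps c w) \<Longrightarrow> g \<le> length (filter (\<lambda>x. x \<noteq> c) w)"
  by (induction w arbitrary: g) auto

lemma coinv_Cons: "coinv (x # xs) = length (filter (\<lambda>y. x < y) xs) + coinv xs"
proof -
  let ?S = "{(i, j). i < j \<and> j < length xs \<and> xs ! i < xs ! j}"
  let ?A = "(\<lambda>j. (0::nat, Suc j)) ` {j. j < length xs \<and> x < xs ! j}"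
  let ?B = "(\<lambda>(i, j). (Suc i, Suc j)) ` ?S"
  have split: "{(i, j). i < j \<and> j < length (x # xs) \<and> (x # xs) ! i < (x # xs) ! j} = ?A \<union> ?B"
  proof (rule set_eqI, clarify)
    fix i j
    show "((i, j) \<in> {(i, j). i < j \<and> j < length (x # xs) \<and> (x # xs) ! i < (x # xs) ! j})
          = ((i, j) \<in> ?A \<union> ?B)"
      by (cases i; cases j) (auto simp: image_iff)
  qed
  have "finite ?S" by (rule finite_subset[of _ "{..<length xs} \<times> {..<length xs}"]) auto
  then have "card (?A \<union> ?B) = card ?A + card ?B"
    by (intro card_Un_disjoint) auto
  moreover have "card ?A = length (filter (\<lambda>y. x < y) xs)"
    by (subst card_image) (auto simp: inj_on_def length_filter_conv_card)
  moreover have "card ?B = card ?S"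
    by (rule card_image) (auto simp: inj_on_def)
  ultimately show ?thesis unfolding coinv_def split by simp
qed

lemma coinv_eq_coinv_filter_plus_gaps:
  "\<forall>x\<in>set w. x \<le> c \<Longrightarrow> coinv w = coinv (filter (\<lambda>x. x \<noteq> c) w) + sum_list (gaps c w)"
proof (induction w)
  case (Cons x w)
  show ?case
  proof (cases "x = c")
    case True
    with Cons show ?thesis by (auto simp: coinv_Cons filter_empty_conv)
  next
    case False
    with Cons.prems have "x < c" by auto
    then have "length (filter (\<lambda>y. x < y) w)
             = length (filter (\<lambda>y. x < y) (filter (\<lambda>y. y \<noteq> c) w)) + count_list w c"
      by (induction w) auto
    with Cons False show ?thesis
      using sum_list_Suc[of id] by (simp add: coinv_Cons length_gaps)
  qed
qed (simp add: coinv_def)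

lemma coinv_remove_one:
  "\<forall>x\<in>set A. 1 \<le> x \<Longrightarrow> \<forall>x\<in>set B. 1 < x \<Longrightarrow> coinv (A @ 1 # B) = coinv (A @ B) + length B"
proof (induction A)
  case Nil
  then show ?case by (simp add: coinv_Cons filter_id_conv)
next
  case (Cons a A)
  then have "\<not> a < 1" by auto
  with Cons show ?case by (simp add: coinv_Cons)
qed

lemma Least_nth_eq_length_takeWhile:
  assumes "a \<in> set w"
  shows "(LEAST i. i < length w \<and> w ! i = a) = length (takeWhile (\<lambda>x. x \<noteq> a) w)"
proof (rule Least_equality)
  have "length (takeWhile (\<lambda>x. x \<noteq> a) w) < length w"
    using assms by (induction w) auto
  then show "length (takeWhile (\<lambda>x. x \<noteq> a) w) < length w \<and> w ! length (takeWhile (\<lambda>x. x \<noteq> a) w) = a"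
    using nth_length_takeWhile[of "\<lambda>x. x \<noteq> a" w] by auto
next
  fix i assume "i < length w \<and> w ! i = a"
  then show "length (takeWhile (\<lambda>x. x \<noteq> a) w) \<le> i"
    by (metis (mono_tags, lifting) leI nth_mem set_takeWhileD takeWhile_nth)
qed

lemma Min_gaps: "c \<in> set w \<Longrightarrow> Min (set (gaps c w)) = length (takeWhile (\<lambda>x. x \<noteq> c) w)"
proof (induction w)
  case (Cons x w)
  show ?case
  proof (cases "x = c")
    case False
    with Cons.prems have "gaps c w \<noteq> []"
      by (metis length_0_conv length_gaps count_list_0_iff set_ConsD)
    then have "Min (Suc ` set (gaps c w)) = Suc (Min (set (gaps c w)))"
      by (simp add: mono_Min_commute[symmetric] mono_def)
    with Cons False show ?thesis by simp
  qed (simp add: Min_insert2)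
qed simp

lemma pn_eq_Min_gaps: "n \<in> set w \<Longrightarrow> pn n w = Suc (Min (set (gaps n w)))"
  by (simp add: pn_def Least_nth_eq_length_takeWhile Min_gaps)

lemma p1_eq_length_takeWhile:
  "1 \<in> set (filter (\<lambda>x. x \<noteq> n) w)
   \<Longrightarrow> p1 n w = Suc (length (takeWhile (\<lambda>x. x \<noteq> 1) (rev (filter (\<lambda>x. x \<noteq> n) w))))"
  unfolding p1_def Let_def by (subst Least_nth_eq_length_takeWhile) auto

definition phi :: "nat \<Rightarrow> nat list \<Rightarrow> nat list" where
  "phi n w =
     (let v = rev (filter (\<lambda>x. x \<noteq> n) w); t = takeWhile (\<lambda>x. x \<noteq> 1) v;
          r = tl (dropWhile (\<lambda>x. x \<noteq> 1) v)
      in insert_gaps n (rev (t @ r)) (length t # map (\<lambda>g. g - 1) (gaps n w)))"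

definition psi :: "nat \<Rightarrow> nat list \<Rightarrow> nat list" where
  "psi n w =
     (let v = rev (filter (\<lambda>x. x \<noteq> n) w); G = gaps n w; h = Min (set G)
      in insert_gaps n (rev (take h v @ 1 # drop h v)) (map Suc (remove1 h G)))"

lemma phi_eq:
  assumes "rev (filter (\<lambda>x. x \<noteq> n) w) = t @ 1 # r" and "1 \<notin> set t"
  shows "phi n w = insert_gaps n (rev (t @ r)) (length t # map (\<lambda>g. g - 1) (gaps n w))"
  using assms unfolding phi_def Let_def by (simp add: takeWhile_append dropWhile_append)

lemma psi_eq:
  assumes "rev (filter (\<lambda>x. x \<noteq> n) w) = A @ B" and "length A = Min (set (gaps n w))"
  shows "psi n w = insert_gaps n (rev (A @ 1 # B)) (map Suc (remove1 (length A) (gaps n w)))"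
  using assms unfolding psi_def Let_def by (metis append_eq_conv_conj)

context
  fixes n :: nat and w t r :: "nat list"
  assumes split: "rev (filter (\<lambda>x. x \<noteq> n) w) = t @ 1 # r"
    and no_one: "1 \<notin> set t"
    and gaps_gt: "\<forall>g\<in>set (gaps n w). length t < g"
begin

lemma phi_code_wf:
  "n \<notin> set (rev (t @ r)) \<and> (\<forall>g\<in>set (length t # map (\<lambda>g. g - 1) (gaps n w)). g \<le> length (rev (t @ r)))"
proof -
  have "set (t @ 1 # r) = set (filter (\<lambda>x. x \<noteq> n) w)" by (metis split set_rev)
  moreover have "length (filter (\<lambda>x. x \<noteq> n) w) = Suc (length (t @ r))"
    using arg_cong[OF split, of length] by simp
  ultimately show ?thesis using gaps_le_length_filter[of _ n w] by fastforce
qed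

lemma filter_phi: "filter (\<lambda>x. x \<noteq> n) (phi n w) = rev (t @ r)"
  using phi_eq[OF split no_one] filter_insert_gaps phi_code_wf by simp

lemma mset_gaps_phi: "mset (gaps n (phi n w)) = mset (length t # map (\<lambda>g. g - 1) (gaps n w))"
  using phi_eq[OF split no_one] mset_gaps_insert_gaps phi_code_wf by presburger

lemma count_phi: "count_list (phi n w) n = Suc (count_list w n)"
  using arg_cong[OF mset_gaps_phi, of size] by (simp add: length_gaps)

lemma Min_gaps_phi: "Min (set (gaps n (phi n w))) = length t"
proof -
  have "set (gaps n (phi n w)) = insert (length t) ((\<lambda>g. g - 1) ` set (gaps n w))"
    by (metis mset_gaps_phi set_mset_mset list.set(2) set_map)
  then show ?thesis using gaps_gt by (auto intro!: Min_eqI)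
qed

lemma psi_phi: "psi n (phi n w) = w"
proof -
  have "psi n (phi n w) = insert_gaps n (rev (t @ 1 # r)) (map Suc (remove1 (length t) (gaps n (phi n w))))"
    using filter_phi Min_gaps_phi by (intro psi_eq) auto
  also have "rev (t @ 1 # r) = filter (\<lambda>x. x \<noteq> n) w" by (metis split rev_rev_ident)
  also have "insert_gaps n (filter (\<lambda>x. x \<noteq> n) w) (map Suc (remove1 (length t) (gaps n (phi n w))))
           = insert_gaps n (filter (\<lambda>x. x \<noteq> n) w) (gaps n w)"
  proof (rule insert_gaps_mset_cong)
    have "mset (map Suc (remove1 (length t) (gaps n (phi n w))))
          = image_mset Suc (mset (map (\<lambda>g. g - 1) (gaps n w)))"
      using mset_gaps_phi by simp
    also have "\<dots> = mset (map Suc (map (\<lambda>g. g - 1) (gaps n w)))" by (simp only: mset_map)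
    also have "map Suc (map (\<lambda>g. g - 1) (gaps n w)) = gaps n w"
      unfolding map_map by (rule map_idI) (use gaps_gt in fastforce)
    finally show "mset (map Suc (remove1 (length t) (gaps n (phi n w)))) = mset (gaps n w)" .
  qed
  finally show ?thesis by (simp add: insert_gaps_filter_gaps)
qed

lemma coinv_filter_delete_one:
  assumes letters: "set w \<subseteq> {1..n}"
  shows "coinv (rev (t @ r)) + length t = coinv (filter (\<lambda>x. x \<noteq> n) w)"
proof -
  have "set (t @ 1 # r) = set (filter (\<lambda>x. x \<noteq> n) w)" by (metis split set_rev)
  then have pos: "\<forall>x\<in>set (t @ 1 # r). 1 \<le> x" using letters by fastforce
  then have "\<forall>x\<in>set (rev r). 1 \<le> x" by simp
  moreover have "1 < x" if "x \<in> set (rev t)" for x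
  proof -
    have "1 \<le> x" using pos that by simp
    moreover have "x \<noteq> 1" using no_one that by auto
    ultimately show ?thesis by simp
  qed
  ultimately have "coinv (rev r @ 1 # rev t) = coinv (rev r @ rev t) + length (rev t)"
    by (intro coinv_remove_one) auto
  moreover have "filter (\<lambda>x. x \<noteq> n) w = rev r @ 1 # rev t"
    using arg_cong[OF split, of rev] by simp
  ultimately show ?thesis by (simp only: rev_append length_rev)
qed

lemma coinv_phi:
  assumes letters: "set w \<subseteq> {1..n}"
  shows "coinv (phi n w) + count_list w n = coinv w"
proof -
  have "set (t @ 1 # r) = set (filter (\<lambda>x. x \<noteq> n) w)" by (metis split set_rev)
  then have tr: "set (t @ 1 # r) \<subseteq> {1..<n}" using letters by fastforce
  have "x \<le> n" if "x \<in> set (phi n w)" for x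
  proof (cases "x = n")
    case False
    with that have "x \<in> set (rev (t @ r))" using filter_phi by (metis (mono_tags) mem_Collect_eq set_filter)
    with tr show ?thesis by auto
  qed simp
  then have "coinv (phi n w) = coinv (rev (t @ r)) + sum_list (gaps n (phi n w))"
    using coinv_eq_coinv_filter_plus_gaps[of "phi n w" n] filter_phi by simp
  moreover have "sum_list (gaps n (phi n w)) = length t + sum_list (map (\<lambda>g. g - 1) (gaps n w))"
    by (metis mset_gaps_phi sum_mset_sum_list sum_list.Cons)
  moreover have "sum_list (map (\<lambda>g. g - 1) (gaps n w)) + count_list w n = sum_list (gaps n w)"
  proof -
    have "map (\<lambda>g. Suc (g - 1)) (gaps n w) = gaps n w"
      by (rule map_idI) (use gaps_gt in fastforce)
    then show ?thesis using sum_list_Suc[of "\<lambda>g. g - 1" "gaps n w"] by (simp add: length_gaps)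
  qed
  moreover have "coinv w = coinv (filter (\<lambda>x. x \<noteq> n) w) + sum_list (gaps n w)"
    using letters by (intro coinv_eq_coinv_filter_plus_gaps) auto
  ultimately show ?thesis using coinv_filter_delete_one[OF letters] by linarith
qed

end

context
  fixes n :: nat and w A B :: "nat list"
  assumes split: "rev (filter (\<lambda>x. x \<noteq> n) w) = A @ B"
    and min_gap: "length A = Min (set (gaps n w))"
    and has_n: "n \<in> set w"
    and n_ne_1: "n \<noteq> 1"
begin

lemma psi_code_wf:
  "n \<notin> set (rev (A @ 1 # B))
   \<and> (\<forall>g\<in>set (map Suc (remove1 (length A) (gaps n w))). g \<le> length (rev (A @ 1 # B)))"
proof -
  have "set (A @ B) = set (filter (\<lambda>x. x \<noteq> n) w)" by (metis split set_rev)
  moreover have "length (filter (\<lambda>x. x \<noteq> n) w) = length (A @ B)"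
    using arg_cong[OF split, of length] by simp
  ultimately show ?thesis
    using n_ne_1 gaps_le_length_filter[of _ n w] set_remove1_subset[of "length A" "gaps n w"] by fastforce
qed

lemma filter_psi: "filter (\<lambda>x. x \<noteq> n) (psi n w) = rev (A @ 1 # B)"
  using psi_eq[OF split min_gap] filter_insert_gaps psi_code_wf by simp

lemma mset_gaps_psi: "mset (gaps n (psi n w)) = mset (map Suc (remove1 (length A) (gaps n w)))"
  using psi_eq[OF split min_gap] mset_gaps_insert_gaps psi_code_wf by presburger

lemma count_psi: "Suc (count_list (psi n w) n) = count_list w n"
proof -
  have "length A \<in> set (gaps n w)" using min_gap has_n by (simp add: gaps_eq_Nil_iff)
  then have "length (gaps n (psi n w)) = length (gaps n w) - 1"
    by (metis mset_gaps_psi size_mset length_map length_remove1)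
  moreover have "length (gaps n w) \<noteq> 0" using has_n by (simp add: gaps_eq_Nil_iff)
  ultimately show ?thesis by (simp add: length_gaps)
qed

lemma gaps_psi_gt: "\<forall>g\<in>set (gaps n (psi n w)). length A < g"
proof
  fix g assume "g \<in> set (gaps n (psi n w))"
  then have "g \<in> set (map Suc (remove1 (length A) (gaps n w)))"
    using mset_gaps_psi by (metis set_mset_mset)
  then obtain h where "h \<in> set (gaps n w)" and "g = Suc h"
    using set_remove1_subset by fastforce
  then show "length A < g" using min_gap Min_le[OF finite_set] by (simp add: less_Suc_eq_le)
qed

lemma phi_psi:
  assumes "1 \<notin> set A"
  shows "phi n (psi n w) = w"
proof -
  have "phi n (psi n w) = insert_gaps n (rev (A @ B)) (length A # map (\<lambda>g. g - 1) (gaps n (psi n w)))"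
    using filter_psi assms by (intro phi_eq) auto
  also have "rev (A @ B) = filter (\<lambda>x. x \<noteq> n) w" by (metis split rev_rev_ident)
  also have "insert_gaps n (filter (\<lambda>x. x \<noteq> n) w) (length A # map (\<lambda>g. g - 1) (gaps n (psi n w)))
           = insert_gaps n (filter (\<lambda>x. x \<noteq> n) w) (gaps n w)"
  proof (rule insert_gaps_mset_cong)
    have "length A \<in> set (gaps n w)" using min_gap has_n by (simp add: gaps_eq_Nil_iff)
    then show "mset (length A # map (\<lambda>g. g - 1) (gaps n (psi n w))) = mset (gaps n w)"
      using mset_gaps_psi by (simp add: multiset.map_comp o_def)
  qed
  finally show ?thesis by (simp add: insert_gaps_filter_gaps)
qed

end

lemma Wk_iff_filter:
  assumes "1 < n"
  shows "w \<in> Wk n \<alpha> N k \<longleftrightarrow>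
    length (filter (\<lambda>x. x \<noteq> n) w) + k = N \<and> set (filter (\<lambda>x. x \<noteq> n) w) \<subseteq> {1..<n}
    \<and> count_list w n = k \<and> count_list (filter (\<lambda>x. x \<noteq> n) w) 1 = Lval n \<alpha> N - k
    \<and> (\<forall>i\<in>{2..n-1}. count_list (filter (\<lambda>x. x \<noteq> n) w) i = \<alpha> i)"
proof -
  have count_filter: "count_list (filter (\<lambda>x. x \<noteq> n) w) i = count_list w i" if "i \<noteq> n" for i
    using that by (induction w) auto
  then have "(\<forall>i\<in>{2..n-1}. count_list (filter (\<lambda>x. x \<noteq> n) w) i = \<alpha> i)
             \<longleftrightarrow> (\<forall>i\<in>{2..n-1}. count_list w i = \<alpha> i)"
    using assms by force
  moreover have "count_list (filter (\<lambda>x. x \<noteq> n) w) 1 = count_list w 1"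
    using assms count_filter by simp
  moreover have "length w = length (filter (\<lambda>x. x \<noteq> n) w) + count_list w n"
    by (induction w) auto
  moreover have "set w \<subseteq> {1..n} \<longleftrightarrow> set (filter (\<lambda>x. x \<noteq> n) w) \<subseteq> {1..<n}"
    using assms by (auto simp: subset_iff)
  ultimately show ?thesis
    unfolding Wk_def by auto
qed

lemma Wk_gt_split:
  assumes n: "1 < n" and k: "k < Lval n \<alpha> N" and w: "w \<in> Wk_gt n \<alpha> N k"
  obtains t r where "rev (filter (\<lambda>x. x \<noteq> n) w) = t @ 1 # r" and "1 \<notin> set t"
    and "\<forall>g\<in>set (gaps n w). length t < g"
proof -
  let ?v = "rev (filter (\<lambda>x. x \<noteq> n) w)"
  define t where "t = takeWhile (\<lambda>x. x \<noteq> 1) ?v"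
  define r where "r = tl (dropWhile (\<lambda>x. x \<noteq> 1) ?v)"
  have "w \<in> Wk n \<alpha> N k" using w k by (auto simp: Wk_gt_def split: if_splits)
  then have "count_list (filter (\<lambda>x. x \<noteq> n) w) 1 > 0" and count_n: "count_list w n = k"
    using k by (auto simp: Wk_iff_filter[OF n])
  then have one: "1 \<in> set (filter (\<lambda>x. x \<noteq> n) w)" by (metis count_notin less_irrefl)
  then have ne: "dropWhile (\<lambda>x. x \<noteq> 1) ?v \<noteq> []" by simp
  then have "hd (dropWhile (\<lambda>x. x \<noteq> 1) ?v) = 1" using hd_dropWhile by blast
  with ne have "dropWhile (\<lambda>x. x \<noteq> 1) ?v = 1 # r" unfolding r_def by (metis list.collapse)
  then have split: "?v = t @ 1 # r" unfolding t_def by (metis takeWhile_dropWhile_id)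
  moreover have no_one: "1 \<notin> set t" unfolding t_def by (auto dest: set_takeWhileD)
  moreover have "\<forall>g\<in>set (gaps n w). length t < g"
  proof (cases "k = 0")
    case True
    then have "gaps n w = []" using count_n by (simp add: gaps_eq_Nil_iff count_list_0_iff[symmetric])
    then show ?thesis by simp
  next
    case False
    then have "p1 n w < pn n w" using w k by (simp add: Wk_gt_def)
    moreover have "n \<in> set w" using False count_n by (metis count_notin)
    ultimately have "length t < Min (set (gaps n w))"
      using pn_eq_Min_gaps p1_eq_length_takeWhile[OF one] by (simp add: t_def)
    then show ?thesis using Min_le[OF finite_set] less_le_trans by blast
  qed
  ultimately show ?thesis by (rule that)
qed

lemma Wk_le_split:
  assumes n: "1 < n" and k: "k < Lval n \<alpha> N" and w: "w \<in> Wk_le n \<alpha> N (Suc k)"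
  obtains A B where "rev (filter (\<lambda>x. x \<noteq> n) w) = A @ B"
    and "length A = Min (set (gaps n w))" and "n \<in> set w" and "1 \<notin> set A"
proof -
  let ?v = "rev (filter (\<lambda>x. x \<noteq> n) w)"
  define h where "h = Min (set (gaps n w))"
  have "w \<in> Wk n \<alpha> N (Suc k)" using w k by (auto simp: Wk_le_def split: if_splits)
  then have count_n: "count_list w n = Suc k"
    and count_1: "count_list (filter (\<lambda>x. x \<noteq> n) w) 1 = Lval n \<alpha> N - Suc k"
    by (auto simp: Wk_iff_filter[OF n])
  then have has_n: "n \<in> set w" by (metis count_notin nat.distinct(1))
  then have "h \<in> set (gaps n w)" unfolding h_def by (simp add: gaps_eq_Nil_iff)
  then have len: "length (take h ?v) = h" using gaps_le_length_filter by fastforce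
  have "1 \<notin> set (take h ?v)"
  proof (cases "Suc k = Lval n \<alpha> N")
    case True
    then have "1 \<notin> set ?v" using count_1 by (simp add: count_list_0_iff)
    then show ?thesis by (auto dest: in_set_takeD)
  next
    case False
    then have "pn n w \<le> p1 n w" using w by (simp add: Wk_le_def)
    moreover have "count_list (filter (\<lambda>x. x \<noteq> n) w) 1 > 0" using count_1 False k by simp
    then have "1 \<in> set (filter (\<lambda>x. x \<noteq> n) w)" by (metis count_notin less_irrefl)
    ultimately have "h \<le> length (takeWhile (\<lambda>x. x \<noteq> 1) ?v)"
      using pn_eq_Min_gaps[OF has_n] p1_eq_length_takeWhile by (simp add: h_def)
    then have "take h ?v = take h (takeWhile (\<lambda>x. x \<noteq> 1) ?v)"
      by (metis min.absorb1 take_take takeWhile_eq_take)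
    then show ?thesis by (auto dest: in_set_takeD set_takeWhileD)
  qed
  then show ?thesis using that[of "take h ?v" "drop h ?v"] len has_n by (simp add: h_def)
qed

lemma phi_Wk_le:
  assumes n: "1 < n" and k: "k < Lval n \<alpha> N" and w: "w \<in> Wk_gt n \<alpha> N k"
  shows "phi n w \<in> Wk_le n \<alpha> N (Suc k)"
proof -
  obtain t r where split: "rev (filter (\<lambda>x. x \<noteq> n) w) = t @ 1 # r" and no_one: "1 \<notin> set t"
    and gt: "\<forall>g\<in>set (gaps n w). length t < g"
    using Wk_gt_split[OF n k w] .
  have "w \<in> Wk n \<alpha> N k" using w k by (auto simp: Wk_gt_def split: if_splits)
  moreover have F: "filter (\<lambda>x. x \<noteq> n) w = rev r @ 1 # rev t" using arg_cong[OF split, of rev] by simp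
  ultimately have W: "length (rev r @ 1 # rev t) + k = N" "set (rev r @ 1 # rev t) \<subseteq> {1..<n}"
    "count_list w n = k" "count_list (rev r @ 1 # rev t) 1 = Lval n \<alpha> N - k"
    "\<forall>i\<in>{2..n-1}. count_list (rev r @ 1 # rev t) i = \<alpha> i"
    by (simp_all add: Wk_iff_filter[OF n])
  have F_phi: "filter (\<lambda>x. x \<noteq> n) (phi n w) = rev r @ rev t"
    using filter_phi[OF split no_one gt] by simp
  have count_n: "count_list (phi n w) n = Suc k"
    using count_phi[OF split no_one gt] W by simp
  have count_1: "count_list (rev r @ rev t) 1 = Lval n \<alpha> N - Suc k" using W(4) by simp
  have in_Wk: "phi n w \<in> Wk n \<alpha> N (Suc k)"
    unfolding Wk_iff_filter[OF n] F_phi using W count_n count_1 by auto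
  show ?thesis
  proof (cases "Suc k = Lval n \<alpha> N")
    case True
    then show ?thesis using in_Wk by (simp add: Wk_le_def)
  next
    case False
    have "count_list (phi n w) n \<noteq> 0" using count_n by simp
    then have "n \<in> set (phi n w)" by (simp add: count_list_0_iff)
    then have "pn n (phi n w) = Suc (length t)"
      using pn_eq_Min_gaps Min_gaps_phi[OF split no_one gt] by simp
    moreover have "p1 n (phi n w) = Suc (length t + length (takeWhile (\<lambda>x. x \<noteq> 1) r))"
    proof -
      have "count_list (rev r @ rev t) 1 > 0" using count_1 False k by simp
      then have "1 \<in> set (filter (\<lambda>x. x \<noteq> n) (phi n w))"
        unfolding F_phi by (metis count_notin less_irrefl)
      then have "p1 n (phi n w) = Suc (length (takeWhile (\<lambda>x. x \<noteq> 1) (rev (filter (\<lambda>x. x \<noteq> n) (phi n w)))))"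
        by (rule p1_eq_length_takeWhile)
      also have "rev (filter (\<lambda>x. x \<noteq> n) (phi n w)) = t @ r" using F_phi by simp
      also have "takeWhile (\<lambda>x. x \<noteq> 1) (t @ r) = t @ takeWhile (\<lambda>x. x \<noteq> 1) r"
        by (rule takeWhile_append2) (use no_one in auto)
      finally show ?thesis by simp
    qed
    ultimately have "pn n (phi n w) \<le> p1 n (phi n w)" by simp
    then show ?thesis using in_Wk False by (simp add: Wk_le_def)
  qed
qed

lemma psi_Wk_gt:
  assumes n: "1 < n" and k: "k < Lval n \<alpha> N" and w: "w \<in> Wk_le n \<alpha> N (Suc k)"
  shows "psi n w \<in> Wk_gt n \<alpha> N k"
proof -
  obtain A B where split: "rev (filter (\<lambda>x. x \<noteq> n) w) = A @ B"
    and min_gap: "length A = Min (set (gaps n w))" and has_n: "n \<in> set w" and no_one: "1 \<notin> set A"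
    using Wk_le_split[OF n k w] .
  have n1: "n \<noteq> 1" using n by simp
  have "w \<in> Wk n \<alpha> N (Suc k)" using w k by (auto simp: Wk_le_def split: if_splits)
  moreover have F: "filter (\<lambda>x. x \<noteq> n) w = rev B @ rev A" using arg_cong[OF split, of rev] by simp
  ultimately have W: "length (rev B @ rev A) + Suc k = N" "set (rev B @ rev A) \<subseteq> {1..<n}"
    "count_list w n = Suc k" "count_list (rev B @ rev A) 1 = Lval n \<alpha> N - Suc k"
    "\<forall>i\<in>{2..n-1}. count_list (rev B @ rev A) i = \<alpha> i"
    by (simp_all add: Wk_iff_filter[OF n])
  have F_psi: "filter (\<lambda>x. x \<noteq> n) (psi n w) = rev B @ 1 # rev A"
    using filter_psi[OF split min_gap has_n n1] by simp
  have count_n: "count_list (psi n w) n = k"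
    using count_psi[OF split min_gap has_n n1] W by simp
  have in_Wk: "psi n w \<in> Wk n \<alpha> N k"
    unfolding Wk_iff_filter[OF n] F_psi using W count_n k n by auto
  show ?thesis
  proof (cases "k = 0")
    case True
    then show ?thesis using in_Wk by (simp add: Wk_gt_def)
  next
    case False
    then have "count_list (psi n w) n \<noteq> 0" using count_n by simp
    then have "n \<in> set (psi n w)" by (simp add: count_list_0_iff)
    then have "pn n (psi n w) = Suc (Min (set (gaps n (psi n w))))" by (rule pn_eq_Min_gaps)
    moreover have "gaps n (psi n w) \<noteq> []"
      using \<open>n \<in> set (psi n w)\<close> by (simp add: gaps_eq_Nil_iff)
    ultimately have "Suc (length A) < pn n (psi n w)"
      using gaps_psi_gt[OF split min_gap has_n n1] by simp
    moreover have "p1 n (psi n w) = Suc (length (takeWhile (\<lambda>x. x \<noteq> 1) (rev (filter (\<lambda>x. x \<noteq> n) (psi n w)))))"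
      using F_psi by (intro p1_eq_length_takeWhile) simp
    moreover have "takeWhile (\<lambda>x. x \<noteq> 1) (A @ 1 # B) = A @ takeWhile (\<lambda>x. x \<noteq> 1) (1 # B)"
      by (rule takeWhile_append2) (use no_one in auto)
    then have "takeWhile (\<lambda>x. x \<noteq> 1) (rev (filter (\<lambda>x. x \<noteq> n) (psi n w))) = A"
      using F_psi by simp
    ultimately show ?thesis using in_Wk False k by (simp add: Wk_gt_def)
  qed
qed

lemma psi_phi_Wk:
  assumes "1 < n" and "k < Lval n \<alpha> N" and "w \<in> Wk_gt n \<alpha> N k"
  shows "psi n (phi n w) = w"
  using Wk_gt_split[OF assms] psi_phi by metis

lemma phi_psi_Wk:
  assumes "1 < n" and "k < Lval n \<alpha> N" and "w \<in> Wk_le n \<alpha> N (Suc k)"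
  shows "phi n (psi n w) = w"
proof -
  obtain A B where "rev (filter (\<lambda>x. x \<noteq> n) w) = A @ B" and "length A = Min (set (gaps n w))"
    and "n \<in> set w" and "1 \<notin> set A"
    using Wk_le_split[OF assms] .
  with \<open>1 < n\<close> show ?thesis using phi_psi by simp
qed

lemma bij_betw_phi_Wk:
  assumes "1 < n" and "k < Lval n \<alpha> N"
  shows "bij_betw (phi n) (Wk_gt n \<alpha> N k) (Wk_le n \<alpha> N (Suc k))"
  by (rule bij_betw_byWitness[where f' = "psi n"])
    (use assms psi_phi_Wk phi_psi_Wk phi_Wk_le psi_Wk_gt in blast)+

lemma quinv'_phi:
  assumes n: "1 < n" and k: "k < Lval n \<alpha> N" and w: "w \<in> Wk_gt n \<alpha> N k"
  shows "quinv' n \<alpha> l (phi n w) = quinv' n \<alpha> l w"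
proof -
  obtain t r where split: "rev (filter (\<lambda>x. x \<noteq> n) w) = t @ 1 # r" and no_one: "1 \<notin> set t"
    and gt: "\<forall>g\<in>set (gaps n w). length t < g"
    using Wk_gt_split[OF n k w] .
  have "w \<in> Wk n \<alpha> N k" using w k by (auto simp: Wk_gt_def split: if_splits)
  then have "set w \<subseteq> {1..n}" and count_n: "count_list w n = k" by (simp_all add: Wk_def)
  then have "coinv (phi n w) + k = coinv w" using coinv_phi[OF split no_one gt] by simp
  moreover have "count_list (phi n w) n = Suc k" using count_phi[OF split no_one gt] count_n by simp
  moreover have "(Suc k choose 2) = k + (k choose 2)" by (simp add: numeral_2_eq_2)
  ultimately show ?thesis using count_n unfolding quinv'_def by simp
qed

lemma filter_phi_middle_letters:
  assumes n: "1 < n" and k: "k < Lval n \<alpha> N" and w: "w \<in> Wk_gt n \<alpha> N k"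
  shows "filter (\<lambda>x. 2 \<le> x \<and> x \<le> n - 1) (phi n w) = filter (\<lambda>x. 2 \<le> x \<and> x \<le> n - 1) w"
proof -
  let ?P = "\<lambda>x. 2 \<le> x \<and> x \<le> n - 1"
  obtain t r where split: "rev (filter (\<lambda>x. x \<noteq> n) w) = t @ 1 # r" and no_one: "1 \<notin> set t"
    and gt: "\<forall>g\<in>set (gaps n w). length t < g"
    using Wk_gt_split[OF n k w] .
  have drop_n: "filter ?P (filter (\<lambda>x. x \<noteq> n) u) = filter ?P u" for u
    using n by (induction u) auto
  have "filter ?P (phi n w) = filter ?P (rev (t @ r))"
    using drop_n[of "phi n w"] filter_phi[OF split no_one gt] by simp
  also have "\<dots> = filter ?P (rev (t @ 1 # r))" by simp
  also have "rev (t @ 1 # r) = filter (\<lambda>x. x \<noteq> n) w" using arg_cong[OF split, of rev] by simp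
  also have "filter ?P (filter (\<lambda>x. x \<noteq> n) w) = filter ?P w" by (rule drop_n)
  finally show ?thesis .
qed

lemma bij_betw_UN_inverse:
  assumes "\<And>k. k \<in> I \<Longrightarrow> f ` A k \<subseteq> B k" and "\<And>k. k \<in> I \<Longrightarrow> g ` B k \<subseteq> A k"
    and "\<And>k a. k \<in> I \<Longrightarrow> a \<in> A k \<Longrightarrow> g (f a) = a"
    and "\<And>k b. k \<in> I \<Longrightarrow> b \<in> B k \<Longrightarrow> f (g b) = b"
  shows "bij_betw f (\<Union>k\<in>I. A k) (\<Union>k\<in>I. B k)"
  by (rule bij_betw_byWitness[where f' = g]) (use assms in fast)+

lemma W_gt_eq_UN:
  assumes "0 < Lval n \<alpha> N"
  shows "W_gt n \<alpha> N = (\<Union>k<Lval n \<alpha> N. Wk_gt n \<alpha> N k)"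
  using assms unfolding W_gt_def
  by (auto simp: Wk_gt_def atLeast0AtMost less_Suc_eq_le[symmetric] lessThan_Suc split: if_splits)

lemma W_le_eq_UN:
  assumes "0 < Lval n \<alpha> N"
  shows "W_le n \<alpha> N = (\<Union>k<Lval n \<alpha> N. Wk_le n \<alpha> N (Suc k))"
proof -
  obtain m where m: "Lval n \<alpha> N = Suc m" using assms gr0_implies_Suc by blast
  have "Wk_le n \<alpha> N 0 = {}" using assms by (simp add: Wk_le_def)
  then show ?thesis
    unfolding W_le_def m atLeast0AtMost atMost_Suc_eq_insert_0 lessThan_Suc_atMost by simp
qed

theorem mainTheorem16:
  fixes n N l :: nat and \<alpha> :: "nat \<Rightarrow> nat"
  assumes "n \<ge> 3"
    and "\<forall>i\<in>{2..n-1}. \<alpha> i > 0"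
    and "N > absalpha n \<alpha>"
    and "2 \<le> l" and "l \<le> n"
  shows "\<exists>\<phi>. bij_betw \<phi> (W_gt n \<alpha> N) (W_le n \<alpha> N)
     \<and> (\<forall>k < Lval n \<alpha> N. bij_betw \<phi> (Wk_gt n \<alpha> N k) (Wk_le n \<alpha> N (Suc k)))
     \<and> (\<forall>w\<in>W_gt n \<alpha> N. quinv' n \<alpha> l (\<phi> w) = quinv' n \<alpha> l w)
     \<and> (\<forall>w\<in>W_gt n \<alpha> N. filter (\<lambda>x. 2 \<le> x \<and> x \<le> n - 1) (\<phi> w)
                          = filter (\<lambda>x. 2 \<le> x \<and> x \<le> n - 1) w)"
proof (intro exI conjI ballI allI impI)
  have n: "1 < n" using assms(1) by simp
  have L: "0 < Lval n \<alpha> N" using assms(3) by (simp add: Lval_def)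
  show "bij_betw (phi n) (W_gt n \<alpha> N) (W_le n \<alpha> N)"
    unfolding W_gt_eq_UN[OF L] W_le_eq_UN[OF L]
    by (rule bij_betw_UN_inverse[where g = "psi n"])
      (use n phi_Wk_le psi_Wk_gt psi_phi_Wk phi_psi_Wk in auto)
  show "bij_betw (phi n) (Wk_gt n \<alpha> N k) (Wk_le n \<alpha> N (Suc k))" if "k < Lval n \<alpha> N" for k
    using bij_betw_phi_Wk[OF n that] .
  fix w assume "w \<in> W_gt n \<alpha> N"
  then obtain k where k: "k < Lval n \<alpha> N" and w: "w \<in> Wk_gt n \<alpha> N k"
    unfolding W_gt_eq_UN[OF L] by blast
  show "quinv' n \<alpha> l (phi n w) = quinv' n \<alpha> l w" using quinv'_phi[OF n k w] .
  show "filter (\<lambda>x. 2 \<le> x \<and> x \<le> n - 1) (phi n w) = filter (\<lambda>x. 2 \<le> x \<and> x \<le> n - 1) w"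
    using filter_phi_middle_letters[OF n k w] .
qed

end
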